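(* Let $\mathcal B$ be a finite set of finite distributive double p-algebras and consider the corresponding set $\mathcal Y=\{H(\mathbf A^\flat)\mid \mathbf A\in\mathcal B\}$ of finite ordered sets. The following are equivalent: (1) the algebras in $\mathcal B$ are quasi-primal and share a common ternary discriminator term; (2) each $\mathbf A\in\mathcal B$ is simple; (3) each $\mathbf A\in\mathcal B$ is directly indecomposable and regular, that is, $\mathbf A$ satisfies $[a^*=b^*\ \&\ a^+=b^+]\Rightarrow a=b$; (4) each $\mathbb X\in\mathcal Y$ is connected and every element of $\mathbb X$ is either maximal or minimal.
   Context: A distributive double p-algebra is an algebra $\mathbf A=\langle A;\vee,\wedge,{}^*,{}^+,0,1\rangle$ such that $\mathbf A^\flat=\langle A;\vee,\wedge,0,1\rangle$ is a bounded distributive lattice and ${}^*,{}^+$ are unary operations with $x\wedge y=0\iff y\le x^*$ and $x\vee y=1\iff y\ge x^+$. For a finite bounded distributive lattice $\mathbf L$, $H(\mathbf L)$ is the ordered set of all bounded-lattice homomorphisms $\mathbf L\to\mathbf 2$ ordered pointwise (the Priestley dual of $\mathbf L$). The ternary discriminator on $A$ is $\tau(x,y,z)=x$ if $x\ne y$, $=z$ if $x=y$; a finite algebra is quasi-primal if $\tau$ is a term function; a family shares a common ternary discriminator term if one ternary term induces $\tau$ on every member. *)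

theory Defs
  imports Main
begin

text \<open>Algebras of type (2,2,1,1,0,0): join, meet, pseudocomplement, dual pseudocomplement, 0, 1,
  given on a carrier subset of an ambient type.\<close>
record 'a dpa =
  car :: "'a set"
  jn  :: "'a \<Rightarrow> 'a \<Rightarrow> 'a"
  mt  :: "'a \<Rightarrow> 'a \<Rightarrow> 'a"
  st  :: "'a \<Rightarrow> 'a"
  pl  :: "'a \<Rightarrow> 'a"
  bot :: "'a"
  top :: "'a"

definition alg_closed :: "'a dpa \<Rightarrow> bool" where
  "alg_closed A \<longleftrightarrow>
     (\<forall>x\<in>car A. \<forall>y\<in>car A. jn A x y \<in> car A \<and> mt A x y \<in> car A) \<and>
     (\<forall>x\<in>car A. st A x \<in> car A \<and> pl A x \<in> car A) \<and>
     bot A \<in> car A \<and> top A \<in> car A"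

definition leq :: "'a dpa \<Rightarrow> 'a \<Rightarrow> 'a \<Rightarrow> bool" where
  "leq A x y \<longleftrightarrow> mt A x y = x"

definition bdl :: "'a dpa \<Rightarrow> bool" where
  "bdl A \<longleftrightarrow> alg_closed A \<and>
     (\<forall>x\<in>car A. \<forall>y\<in>car A. jn A x y = jn A y x \<and> mt A x y = mt A y x) \<and>
     (\<forall>x\<in>car A. \<forall>y\<in>car A. \<forall>z\<in>car A.
        jn A (jn A x y) z = jn A x (jn A y z) \<and> mt A (mt A x y) z = mt A x (mt A y z)) \<and>
     (\<forall>x\<in>car A. \<forall>y\<in>car A. jn A x (mt A x y) = x \<and> mt A x (jn A x y) = x) \<and>
     (\<forall>x\<in>car A. \<forall>y\<in>car A. \<forall>z\<in>car A. mt A x (jn A y z) = jn A (mt A x y) (mt A x z)) \<and>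
     (\<forall>x\<in>car A. jn A x (bot A) = x \<and> mt A x (top A) = x)"

definition ddp_algebra :: "'a dpa \<Rightarrow> bool" where
  "ddp_algebra A \<longleftrightarrow> bdl A \<and>
     (\<forall>x\<in>car A. \<forall>y\<in>car A. mt A x y = bot A \<longleftrightarrow> leq A y (st A x)) \<and>
     (\<forall>x\<in>car A. \<forall>y\<in>car A. jn A x y = top A \<longleftrightarrow> leq A (pl A x) y)"

datatype tterm = VX | VY | VZ | TJn tterm tterm | TMt tterm tterm | TSt tterm | TPl tterm
  | TBot | TTop

fun teval :: "'a dpa \<Rightarrow> 'a \<Rightarrow> 'a \<Rightarrow> 'a \<Rightarrow> tterm \<Rightarrow> 'a" where
  "teval A x y z VX = x"
| "teval A x y z VY = y"
| "teval A x y z VZ = z"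
| "teval A x y z (TJn s t) = jn A (teval A x y z s) (teval A x y z t)"
| "teval A x y z (TMt s t) = mt A (teval A x y z s) (teval A x y z t)"
| "teval A x y z (TSt s) = st A (teval A x y z s)"
| "teval A x y z (TPl s) = pl A (teval A x y z s)"
| "teval A x y z TBot = bot A"
| "teval A x y z TTop = top A"

definition discr :: "'a \<Rightarrow> 'a \<Rightarrow> 'a \<Rightarrow> 'a" where
  "discr x y z = (if x \<noteq> y then x else z)"

definition is_discr_term :: "tterm \<Rightarrow> 'a dpa \<Rightarrow> bool" where
  "is_discr_term t A \<longleftrightarrow>
     (\<forall>x\<in>car A. \<forall>y\<in>car A. \<forall>z\<in>car A. teval A x y z t = discr x y z)"

definition quasi_primal :: "'a dpa \<Rightarrow> bool" where
  "quasi_primal A \<longleftrightarrow> finite (car A) \<and> (\<exists>t. is_discr_term t A)"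

definition congruence :: "'a dpa \<Rightarrow> ('a \<times> 'a) set \<Rightarrow> bool" where
  "congruence A \<theta> \<longleftrightarrow> equiv (car A) \<theta> \<and>
     (\<forall>x x' y y'. (x,x') \<in> \<theta> \<longrightarrow> (y,y') \<in> \<theta> \<longrightarrow>
        (jn A x y, jn A x' y') \<in> \<theta> \<and> (mt A x y, mt A x' y') \<in> \<theta>) \<and>
     (\<forall>x x'. (x,x') \<in> \<theta> \<longrightarrow> (st A x, st A x') \<in> \<theta> \<and> (pl A x, pl A x') \<in> \<theta>)"

definition simple :: "'a dpa \<Rightarrow> bool" where
  "simple A \<longleftrightarrow> {\<theta>. congruence A \<theta>} = {Id_on (car A), car A \<times> car A}"

definition prod_alg :: "'a dpa \<Rightarrow> 'b dpa \<Rightarrow> ('a \<times> 'b) dpa" where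
  "prod_alg B C =
     \<lparr> car = car B \<times> car C,
       jn = (\<lambda>(b,c) (b',c'). (jn B b b', jn C c c')),
       mt = (\<lambda>(b,c) (b',c'). (mt B b b', mt C c c')),
       st = (\<lambda>(b,c). (st B b, st C c)),
       pl = (\<lambda>(b,c). (pl B b, pl C c)),
       bot = (bot B, bot C),
       top = (top B, top C) \<rparr>"

definition is_hom :: "('a \<Rightarrow> 'b) \<Rightarrow> 'a dpa \<Rightarrow> 'b dpa \<Rightarrow> bool" where
  "is_hom f A B \<longleftrightarrow> f ` car A \<subseteq> car B \<and>
     (\<forall>x\<in>car A. \<forall>y\<in>car A. f (jn A x y) = jn B (f x) (f y) \<and> f (mt A x y) = mt B (f x) (f y)) \<and>
     (\<forall>x\<in>car A. f (st A x) = st B (f x) \<and> f (pl A x) = pl B (f x)) \<and>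
     f (bot A) = bot B \<and> f (top A) = top B"

definition is_iso :: "('a \<Rightarrow> 'b) \<Rightarrow> 'a dpa \<Rightarrow> 'b dpa \<Rightarrow> bool" where
  "is_iso f A B \<longleftrightarrow> is_hom f A B \<and> bij_betw f (car A) (car B)"

definition nontrivial :: "'a dpa \<Rightarrow> bool" where
  "nontrivial A \<longleftrightarrow> (\<exists>x\<in>car A. \<exists>y\<in>car A. x \<noteq> y)"

text \<open>The factors are taken on the same ambient
  type; this is no restriction since factors of A have at most |A| elements.\<close>
definition directly_indecomposable :: "'a dpa \<Rightarrow> bool" where
  "directly_indecomposable A \<longleftrightarrow>
     \<not> (\<exists>B C. \<exists>f :: 'a \<Rightarrow> 'a \<times> 'a. alg_closed B \<and> alg_closed C \<and> nontrivial B \<and> nontrivial C \<and>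
            is_iso f A (prod_alg B C))"

definition regular :: "'a dpa \<Rightarrow> bool" where
  "regular A \<longleftrightarrow> (\<forall>a\<in>car A. \<forall>b\<in>car A. st A a = st A b \<and> pl A a = pl A b \<longrightarrow> a = b)"

text \<open>Priestley dual H(L) of the bounded-lattice reduct: bounded-lattice homomorphisms into
  the two-element lattice (bool), made extensional (False outside the carrier), ordered
  pointwise.\<close>
definition H :: "'a dpa \<Rightarrow> ('a \<Rightarrow> bool) set" where
  "H A = {h. (\<forall>x\<in>car A. \<forall>y\<in>car A. h (jn A x y) = (h x \<or> h y) \<and> h (mt A x y) = (h x \<and> h y)) \<and>
              h (bot A) = False \<and> h (top A) = True \<and> (\<forall>x. x \<notin> car A \<longrightarrow> h x = False)}"

definition H_le :: "'a dpa \<Rightarrow> ('a \<Rightarrow> bool) \<Rightarrow> ('a \<Rightarrow> bool) \<Rightarrow> bool" where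
  "H_le A g h \<longleftrightarrow> (\<forall>x\<in>car A. g x \<longrightarrow> h x)"

definition poset_connected :: "'b set \<Rightarrow> ('b \<Rightarrow> 'b \<Rightarrow> bool) \<Rightarrow> bool" where
  "poset_connected X le \<longleftrightarrow>
     (\<forall>x\<in>X. \<forall>y\<in>X. (x, y) \<in> ({(u,v). u \<in> X \<and> v \<in> X \<and> (le u v \<or> le v u)})\<^sup>*)"

definition is_maximal :: "'b set \<Rightarrow> ('b \<Rightarrow> 'b \<Rightarrow> bool) \<Rightarrow> 'b \<Rightarrow> bool" where
  "is_maximal X le x \<longleftrightarrow> x \<in> X \<and> (\<forall>y\<in>X. le x y \<longrightarrow> y = x)"

definition is_minimal :: "'b set \<Rightarrow> ('b \<Rightarrow> 'b \<Rightarrow> bool) \<Rightarrow> 'b \<Rightarrow> bool" where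
  "is_minimal X le x \<longleftrightarrow> x \<in> X \<and> (\<forall>y\<in>X. le y x \<longrightarrow> y = x)"

end

theory Submission
  imports Defs
begin

text \<open>Every element x of A is represented by the up-set rep x of its Priestley dual H(A); under
  this representation x* is the complement of the down-closure of rep x and x+ is the up-closure
  of the complement of rep x.  Subsets of H(A) that are closed both upwards and downwards
  correspond to the direct decompositions of A, so A is directly indecomposable iff H(A) is connected.
  If some point h of H(A) is neither maximal nor minimal, two elements whose representations differ
  only at h have the same x* and x+; identifying such elements is a proper nontrivial congruence, so
  simple and regular algebras have duals in which every point is maximal or minimal, and conversely
  such a dual forces regularity.  For a connected dual of this shape an explicit term built from
  x*, x+ and n iterations of t \<mapsto> (t+)* is a discriminator as soon as n \<ge> |H(A)|, so a single
  term serves a whole finite family.\<close>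

section \<open>Ordered sets given by a carrier and a relation\<close>

definition poset :: "'b set \<Rightarrow> ('b \<Rightarrow> 'b \<Rightarrow> bool) \<Rightarrow> bool" where
  "poset X le \<longleftrightarrow> (\<forall>x\<in>X. le x x) \<and> (\<forall>x\<in>X. \<forall>y\<in>X. le x y \<longrightarrow> le y x \<longrightarrow> x = y)
     \<and> (\<forall>x\<in>X. \<forall>y\<in>X. \<forall>z\<in>X. le x y \<longrightarrow> le y z \<longrightarrow> le x z)"

definition down :: "'b set \<Rightarrow> ('b \<Rightarrow> 'b \<Rightarrow> bool) \<Rightarrow> 'b set \<Rightarrow> 'b set" where
  "down X le S = {g\<in>X. \<exists>s\<in>S. le g s}"

abbreviation up :: "'b set \<Rightarrow> ('b \<Rightarrow> 'b \<Rightarrow> bool) \<Rightarrow> 'b set \<Rightarrow> 'b set" where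
  "up X le S \<equiv> down X (\<lambda>a b. le b a) S"

definition is_upset :: "'b set \<Rightarrow> ('b \<Rightarrow> 'b \<Rightarrow> bool) \<Rightarrow> 'b set \<Rightarrow> bool" where
  "is_upset X le S \<longleftrightarrow> S \<subseteq> X \<and> (\<forall>s\<in>S. \<forall>g\<in>X. le s g \<longrightarrow> g \<in> S)"

abbreviation is_downset :: "'b set \<Rightarrow> ('b \<Rightarrow> 'b \<Rightarrow> bool) \<Rightarrow> 'b set \<Rightarrow> bool" where
  "is_downset X le S \<equiv> is_upset X (\<lambda>a b. le b a) S"

definition max_or_min :: "'b set \<Rightarrow> ('b \<Rightarrow> 'b \<Rightarrow> bool) \<Rightarrow> bool" where
  "max_or_min X le \<longleftrightarrow> (\<forall>x\<in>X. is_maximal X le x \<or> is_minimal X le x)"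

lemma poset_dual: "poset X le \<Longrightarrow> poset X (\<lambda>a b. le b a)"
  unfolding poset_def by blast

lemma down_subset: "down X le S \<subseteq> X"
  unfolding down_def by blast

lemma subset_down: "poset X le \<Longrightarrow> S \<subseteq> X \<Longrightarrow> S \<subseteq> down X le S"
  unfolding poset_def down_def by blast

lemma down_is_downset: "poset X le \<Longrightarrow> S \<subseteq> X \<Longrightarrow> is_downset X le (down X le S)"
  unfolding poset_def down_def is_upset_def by blast

lemma up_eq_self: "poset X le \<Longrightarrow> is_upset X le U \<Longrightarrow> up X le U = U"
  unfolding poset_def down_def is_upset_def by blast

lemma is_upset_Diff: "is_upset X le S \<Longrightarrow> is_downset X le (X - S)"
  unfolding is_upset_def by blast

lemma down_Un: "down X le (S \<union> T) = down X le S \<union> down X le T"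
  unfolding down_def by blast

lemma down_empty [simp]: "down X le {} = {}"
  unfolding down_def by blast

lemma Diff_down_Int_upset:
  "is_upset X le E \<Longrightarrow> S \<subseteq> X \<Longrightarrow> (X - down X le S) \<inter> E = (X - down X le (S \<inter> E)) \<inter> E"
  unfolding down_def is_upset_def by blast

lemma up_Diff_Int_downset:
  "is_downset X le E \<Longrightarrow> up X le (X - S) \<inter> E = up X le (X - S \<inter> E) \<inter> E"
  unfolding down_def is_upset_def by blast

lemma poset_finite_minimal:
  assumes po: "poset X le" and fin: "finite X" and S: "S \<subseteq> X" "x \<in> S"
  obtains j where "j \<in> S" "\<And>z. z \<in> S \<Longrightarrow> le z j \<Longrightarrow> z = j"
proof -
  define \<mu> where "\<mu> z = card {w\<in>X. le w z}" for z
  obtain j where j: "j \<in> S" "\<And>z. z \<in> S \<Longrightarrow> \<mu> j \<le> \<mu> z"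
    using ex_has_least_nat[of "\<lambda>z. z \<in> S" x \<mu>] S by blast
  have "z = j" if z: "z \<in> S" "le z j" for z
  proof (rule ccontr)
    assume "z \<noteq> j"
    have zj: "z \<in> X" "j \<in> X" using z(1) j(1) S by auto
    have "{w\<in>X. le w z} \<subseteq> {w\<in>X. le w j}"
      using po zj z(2) unfolding poset_def by blast
    moreover have "j \<notin> {w\<in>X. le w z}"
      using po zj z(2) \<open>z \<noteq> j\<close> unfolding poset_def by blast
    moreover have "j \<in> {w\<in>X. le w j}"
      using po zj unfolding poset_def by blast
    ultimately have "{w\<in>X. le w z} \<subset> {w\<in>X. le w j}" by blast
    then have "\<mu> z < \<mu> j" unfolding \<mu>_def by (rule psubset_card_mono[rotated]) (use fin in simp)
    then show False using j(2)[OF z(1)] by simp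
  qed
  then show ?thesis using that j(1) by blast
qed

lemma down_eq_if_upsets_agree_off:
  assumes po: "poset X le" and U: "is_upset X le U" and W: "is_upset X le W"
    and agree: "U - {h} = W - {h}" and h: "h \<in> X" and g: "g \<in> X" "le h g" "g \<noteq> h"
  shows "down X le U = down X le W"
proof -
  have *: "down X le U \<subseteq> down X le W"
    if U: "is_upset X le U" and agree: "U - {h} = W - {h}" for U W
  proof
    fix k assume "k \<in> down X le U"
    then obtain a where a: "a \<in> U" "le k a" "k \<in> X" unfolding down_def by blast
    show "k \<in> down X le W"
    proof (cases "a = h")
      case True
      then have "g \<in> W" using U a g agree unfolding is_upset_def by blast
      moreover have "le k g" using po a True g h unfolding poset_def by blast
      ultimately show ?thesis using a unfolding down_def by blast
    next
      case False
      then show ?thesis using agree a unfolding down_def by blast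
    qed
  qed
  show ?thesis using *[OF U agree] *[OF W agree[symmetric]] by blast
qed

lemma connected_updown_closed_eq:
  assumes conn: "poset_connected X le"
    and up: "is_upset X le K" and down: "is_downset X le K" and "K \<noteq> {}"
  shows "K = X"
proof -
  obtain k where k: "k \<in> K" using \<open>K \<noteq> {}\<close> by blast
  have "K \<subseteq> X" using up unfolding is_upset_def by blast
  moreover have "x \<in> K" if "x \<in> X" for x
  proof -
    have "(k, x) \<in> {(u,v). u \<in> X \<and> v \<in> X \<and> (le u v \<or> le v u)}\<^sup>*"
      using conn k \<open>K \<subseteq> X\<close> that unfolding poset_connected_def by blast
    then show ?thesis
    proof (induction rule: rtrancl_induct)
      case base
      show ?case by (rule k)
    next
      case (step y z)
      then show ?case using up down unfolding is_upset_def by blast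
    qed
  qed
  ultimately show ?thesis by blast
qed

lemma not_connected_updown_closed:
  assumes "\<not> poset_connected X le"
  obtains E where "is_upset X le E" "is_downset X le E" "E \<noteq> {}" "E \<noteq> X"
proof -
  define R where "R = {(u,v). u \<in> X \<and> v \<in> X \<and> (le u v \<or> le v u)}"
  obtain x y where xy: "x \<in> X" "y \<in> X" "(x,y) \<notin> R\<^sup>*"
    using assms unfolding poset_connected_def R_def by blast
  define E where "E = R\<^sup>* `` {x}"
  have "E \<subseteq> X"
  proof
    fix v assume "v \<in> E"
    then have "(x,v) \<in> R\<^sup>*" unfolding E_def by blast
    then show "v \<in> X" by (induction rule: rtrancl_induct) (use xy in \<open>auto simp: R_def\<close>)
  qed
  moreover have "g \<in> E" if "s \<in> E" "g \<in> X" "le s g \<or> le g s" for s g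
  proof -
    have "(s,g) \<in> R" using that \<open>E \<subseteq> X\<close> unfolding R_def by blast
    then show ?thesis using that(1) unfolding E_def by (auto intro: rtrancl_into_rtrancl)
  qed
  ultimately have "is_upset X le E" "is_downset X le E"
    unfolding is_upset_def by blast+
  moreover have "x \<in> E" "y \<notin> E" using xy unfolding E_def by auto
  ultimately show ?thesis using that xy by blast
qed

definition zigzag :: "'b set \<Rightarrow> ('b \<Rightarrow> 'b \<Rightarrow> bool) \<Rightarrow> 'b set \<Rightarrow> 'b set" where
  "zigzag X le K = down X le (up X le K)"

lemma zigzag_subset: "zigzag X le K \<subseteq> X"
  unfolding zigzag_def by (rule down_subset)

lemma subset_zigzag:
  assumes po: "poset X le" and K: "K \<subseteq> X"
  shows "K \<subseteq> zigzag X le K"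
proof -
  have "K \<subseteq> up X le K" using subset_down[OF poset_dual[OF po] K] .
  also have "\<dots> \<subseteq> zigzag X le K" unfolding zigzag_def by (rule subset_down[OF po down_subset])
  finally show ?thesis .
qed

lemma zigzag_fixpoint_eq:
  assumes po: "poset X le" and conn: "poset_connected X le"
    and K: "K \<subseteq> X" "K \<noteq> {}" and fixed: "zigzag X le K = K"
  shows "K = X"
proof (rule connected_updown_closed_eq[OF conn _ _ K(2)])
  have "up X le K \<subseteq> K"
    using subset_down[OF po down_subset, of "\<lambda>a b. le b a" K] fixed unfolding zigzag_def by blast
  then show "is_upset X le K" using K(1) unfolding is_upset_def down_def by blast
  have "down X le K \<subseteq> zigzag X le K"
    using subset_down[OF poset_dual[OF po] K(1)] unfolding zigzag_def down_def by blast
  then show "is_downset X le K" using K(1) fixed unfolding is_upset_def down_def by blast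
qed

lemma funpow_zigzag_subset: "K \<subseteq> X \<Longrightarrow> (zigzag X le ^^ n) K \<subseteq> X"
  by (induction n) (auto simp: zigzag_def down_def)

lemma funpow_zigzag_empty: "(zigzag X le ^^ n) {} = {}"
  by (induction n) (auto simp: zigzag_def)

text \<open>On a connected X the only nonempty fixed point of zigzag is X itself, so every step strictly
  enlarges the set until it is X.\<close>
lemma funpow_zigzag_eq:
  assumes po: "poset X le" and conn: "poset_connected X le" and fin: "finite X"
    and K: "K \<subseteq> X" "K \<noteq> {}" and n: "card X \<le> n"
  shows "(zigzag X le ^^ n) K = X"
proof -
  have "K \<subseteq> (zigzag X le ^^ m) K \<and> (zigzag X le ^^ m) K \<subseteq> X
    \<and> ((zigzag X le ^^ m) K = X \<or> m < card ((zigzag X le ^^ m) K))" for m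
  proof (induction m)
    case 0
    then show ?case using K finite_subset[OF K(1) fin] by (simp add: card_gt_0_iff)
  next
    case (Suc m)
    define Z where "Z = (zigzag X le ^^ m) K"
    have Z: "K \<subseteq> Z" "Z \<subseteq> X" "Z = X \<or> m < card Z" using Suc.IH unfolding Z_def by blast+
    have grow: "Z \<subseteq> zigzag X le Z" using subset_zigzag[OF po Z(2)] .
    have "zigzag X le Z = X \<or> Suc m < card (zigzag X le Z)"
    proof (cases "zigzag X le Z = Z")
      case True
      then show ?thesis using zigzag_fixpoint_eq[OF po conn Z(2)] Z(1) K(2) by blast
    next
      case False
      then have "Z \<subset> zigzag X le Z" using grow by blast
      then have "card Z < card (zigzag X le Z)"
        by (rule psubset_card_mono[OF finite_subset[OF zigzag_subset fin]])
      then show ?thesis using Z(3) grow zigzag_subset[of X le Z] by auto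
    qed
    then show ?case using Z(1) grow zigzag_subset[of X le Z] unfolding Z_def by auto
  qed
  then have "(zigzag X le ^^ n) K \<subseteq> X" "(zigzag X le ^^ n) K = X \<or> n < card ((zigzag X le ^^ n) K)"
    by blast+
  moreover have "card ((zigzag X le ^^ n) K) \<le> card X" using card_mono[OF fin] calculation(1) .
  ultimately show ?thesis using n by linarith
qed

section \<open>Finite distributive double p-algebras\<close>

locale fin_ddp_algebra =
  fixes A :: "'a dpa"
  assumes ddp: "ddp_algebra A" and finite_car: "finite (car A)"
begin

lemma bdl: "bdl A"
  using ddp unfolding ddp_algebra_def by blast

lemma alg_closed: "alg_closed A"
  using bdl unfolding bdl_def by blast

lemma jn_closed [simp]: "x \<in> car A \<Longrightarrow> y \<in> car A \<Longrightarrow> jn A x y \<in> car A"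
  and mt_closed [simp]: "x \<in> car A \<Longrightarrow> y \<in> car A \<Longrightarrow> mt A x y \<in> car A"
  and st_closed [simp]: "x \<in> car A \<Longrightarrow> st A x \<in> car A"
  and pl_closed [simp]: "x \<in> car A \<Longrightarrow> pl A x \<in> car A"
  and bot_closed [simp]: "bot A \<in> car A"
  and top_closed [simp]: "top A \<in> car A"
  using alg_closed unfolding alg_closed_def by auto

lemma jn_comm: "x \<in> car A \<Longrightarrow> y \<in> car A \<Longrightarrow> jn A x y = jn A y x"
  and mt_comm: "x \<in> car A \<Longrightarrow> y \<in> car A \<Longrightarrow> mt A x y = mt A y x"
  and jn_assoc: "x \<in> car A \<Longrightarrow> y \<in> car A \<Longrightarrow> z \<in> car A \<Longrightarrow> jn A (jn A x y) z = jn A x (jn A y z)"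
  and mt_assoc: "x \<in> car A \<Longrightarrow> y \<in> car A \<Longrightarrow> z \<in> car A \<Longrightarrow> mt A (mt A x y) z = mt A x (mt A y z)"
  and jn_mt_absorb: "x \<in> car A \<Longrightarrow> y \<in> car A \<Longrightarrow> jn A x (mt A x y) = x"
  and mt_jn_absorb: "x \<in> car A \<Longrightarrow> y \<in> car A \<Longrightarrow> mt A x (jn A x y) = x"
  and mt_jn_distrib: "x \<in> car A \<Longrightarrow> y \<in> car A \<Longrightarrow> z \<in> car A \<Longrightarrow>
    mt A x (jn A y z) = jn A (mt A x y) (mt A x z)"
  and jn_bot: "x \<in> car A \<Longrightarrow> jn A x (bot A) = x"
  and mt_top: "x \<in> car A \<Longrightarrow> mt A x (top A) = x"
  using bdl unfolding bdl_def by auto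

lemma mt_eq_bot_iff_leq_st: "x \<in> car A \<Longrightarrow> y \<in> car A \<Longrightarrow> mt A x y = bot A \<longleftrightarrow> leq A y (st A x)"
  and jn_eq_top_iff_pl_leq: "x \<in> car A \<Longrightarrow> y \<in> car A \<Longrightarrow> jn A x y = top A \<longleftrightarrow> leq A (pl A x) y"
  using ddp unfolding ddp_algebra_def by auto

lemma mt_idem: "x \<in> car A \<Longrightarrow> mt A x x = x"
  by (metis jn_mt_absorb mt_jn_absorb mt_closed)

lemma leq_refl: "x \<in> car A \<Longrightarrow> leq A x x"
  unfolding leq_def by (rule mt_idem)

lemma leq_antisym: "x \<in> car A \<Longrightarrow> y \<in> car A \<Longrightarrow> leq A x y \<Longrightarrow> leq A y x \<Longrightarrow> x = y"
  unfolding leq_def by (metis mt_comm)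

lemma leq_trans: "x \<in> car A \<Longrightarrow> y \<in> car A \<Longrightarrow> z \<in> car A \<Longrightarrow> leq A x y \<Longrightarrow> leq A y z \<Longrightarrow> leq A x z"
  unfolding leq_def by (metis mt_assoc)

lemma poset_leq: "poset (car A) (leq A)"
  unfolding poset_def using leq_refl leq_antisym leq_trans by blast

lemma leq_jn_iff: "x \<in> car A \<Longrightarrow> y \<in> car A \<Longrightarrow> leq A x y \<longleftrightarrow> jn A x y = y"
  unfolding leq_def by (metis jn_comm jn_mt_absorb mt_comm mt_jn_absorb)

lemma mt_leq1: "x \<in> car A \<Longrightarrow> y \<in> car A \<Longrightarrow> leq A (mt A x y) x"
  unfolding leq_def by (metis mt_assoc mt_comm mt_idem)

lemma mt_leq2: "x \<in> car A \<Longrightarrow> y \<in> car A \<Longrightarrow> leq A (mt A x y) y"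
  unfolding leq_def by (metis mt_assoc mt_idem)

lemma leq_mt: "x \<in> car A \<Longrightarrow> y \<in> car A \<Longrightarrow> z \<in> car A \<Longrightarrow> leq A z x \<Longrightarrow> leq A z y \<Longrightarrow> leq A z (mt A x y)"
  unfolding leq_def by (metis mt_assoc)

lemma jn_leq1: "x \<in> car A \<Longrightarrow> y \<in> car A \<Longrightarrow> leq A x (jn A x y)"
  unfolding leq_def by (rule mt_jn_absorb)

lemma jn_leq2: "x \<in> car A \<Longrightarrow> y \<in> car A \<Longrightarrow> leq A y (jn A x y)"
  unfolding leq_def by (metis mt_jn_absorb jn_comm)

lemma jn_leq: "x \<in> car A \<Longrightarrow> y \<in> car A \<Longrightarrow> z \<in> car A \<Longrightarrow> leq A x z \<Longrightarrow> leq A y z \<Longrightarrow> leq A (jn A x y) z"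
  unfolding leq_def by (metis mt_jn_distrib jn_closed mt_comm)

lemma bot_leq: "x \<in> car A \<Longrightarrow> leq A (bot A) x"
  unfolding leq_def by (metis mt_jn_absorb bot_closed jn_bot jn_comm)

lemma leq_top: "x \<in> car A \<Longrightarrow> leq A x (top A)"
  unfolding leq_def by (rule mt_top)

lemma mt_bot: "x \<in> car A \<Longrightarrow> mt A x (bot A) = bot A"
  using bot_leq unfolding leq_def by (metis bot_closed mt_comm)

lemma jn_top: "x \<in> car A \<Longrightarrow> jn A x (top A) = top A"
  using leq_top leq_jn_iff by simp

lemma leq_bot_iff: "x \<in> car A \<Longrightarrow> leq A x (bot A) \<longleftrightarrow> x = bot A"
  by (metis bot_leq bot_closed leq_antisym leq_refl)

lemma top_leq_iff: "x \<in> car A \<Longrightarrow> leq A (top A) x \<longleftrightarrow> x = top A"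
  by (metis leq_top top_closed leq_antisym leq_refl)

lemma jn_eq_bot_iff: "x \<in> car A \<Longrightarrow> y \<in> car A \<Longrightarrow> jn A x y = bot A \<longleftrightarrow> x = bot A \<and> y = bot A"
  by (metis jn_bot jn_leq1 jn_leq2 leq_bot_iff)

lemma mt_eq_top_iff: "x \<in> car A \<Longrightarrow> y \<in> car A \<Longrightarrow> mt A x y = top A \<longleftrightarrow> x = top A \<and> y = top A"
  by (metis mt_top mt_leq1 mt_leq2 top_leq_iff)

lemma mt_st_self: "x \<in> car A \<Longrightarrow> mt A x (st A x) = bot A"
  using mt_eq_bot_iff_leq_st leq_refl by simp

lemma leq_st_st: "x \<in> car A \<Longrightarrow> leq A x (st A (st A x))"
  using mt_eq_bot_iff_leq_st[of "st A x" x] mt_st_self mt_comm by simp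

lemma st_antitone:
  assumes x: "x \<in> car A" and y: "y \<in> car A" and xy: "leq A x y"
  shows "leq A (st A y) (st A x)"
proof -
  have "mt A x (st A y) = mt A x (mt A y (st A y))"
    using xy mt_assoc x y unfolding leq_def by (metis st_closed)
  also have "\<dots> = bot A" using mt_st_self mt_bot x y by simp
  finally show ?thesis using mt_eq_bot_iff_leq_st x y by simp
qed

lemma st_st_st: "x \<in> car A \<Longrightarrow> st A (st A (st A x)) = st A x"
  by (meson leq_antisym leq_st_st st_antitone st_closed)

lemma jn_pl_self: "x \<in> car A \<Longrightarrow> jn A x (pl A x) = top A"
  using jn_eq_top_iff_pl_leq leq_refl by simp

lemma pl_pl_leq: "x \<in> car A \<Longrightarrow> leq A (pl A (pl A x)) x"
  using jn_eq_top_iff_pl_leq[of "pl A x" x] jn_pl_self jn_comm by simp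

lemma pl_antitone:
  assumes x: "x \<in> car A" and y: "y \<in> car A" and xy: "leq A x y"
  shows "leq A (pl A y) (pl A x)"
proof -
  have "jn A y (pl A x) = jn A y (jn A x (pl A x))"
    using xy jn_assoc jn_comm x y leq_jn_iff by (metis pl_closed)
  also have "\<dots> = top A" using jn_pl_self jn_top x y by simp
  finally show ?thesis using jn_eq_top_iff_pl_leq x y by simp
qed

lemma pl_pl_pl: "x \<in> car A \<Longrightarrow> pl A (pl A (pl A x)) = pl A x"
  by (meson leq_antisym pl_pl_leq pl_antitone pl_closed)

lemma st_eq_top_iff: "x \<in> car A \<Longrightarrow> st A x = top A \<longleftrightarrow> x = bot A"
  by (metis mt_eq_bot_iff_leq_st mt_st_self mt_top top_closed top_leq_iff bot_closed st_closed)

lemma st_bot: "st A (bot A) = top A"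
  using st_eq_top_iff by simp

lemma st_top: "st A (top A) = bot A"
  by (metis mt_comm mt_st_self mt_top st_closed top_closed)

section \<open>Representation by up-sets of the dual\<close>

lemma H_jn: "h \<in> H A \<Longrightarrow> x \<in> car A \<Longrightarrow> y \<in> car A \<Longrightarrow> h (jn A x y) = (h x \<or> h y)"
  and H_mt: "h \<in> H A \<Longrightarrow> x \<in> car A \<Longrightarrow> y \<in> car A \<Longrightarrow> h (mt A x y) = (h x \<and> h y)"
  and H_bot: "h \<in> H A \<Longrightarrow> \<not> h (bot A)"
  and H_top: "h \<in> H A \<Longrightarrow> h (top A)"
  and H_outside: "h \<in> H A \<Longrightarrow> x \<notin> car A \<Longrightarrow> \<not> h x"
  unfolding H_def by auto

lemma H_mono: "h \<in> H A \<Longrightarrow> x \<in> car A \<Longrightarrow> y \<in> car A \<Longrightarrow> leq A x y \<Longrightarrow> h x \<Longrightarrow> h y"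
  unfolding leq_def by (metis H_mt)

lemma principal_filter_in_H:
  assumes j: "j \<in> car A" "j \<noteq> bot A"
    and prime: "\<And>a b. a \<in> car A \<Longrightarrow> b \<in> car A \<Longrightarrow> leq A j (jn A a b) \<Longrightarrow> leq A j a \<or> leq A j b"
  shows "(\<lambda>w. w \<in> car A \<and> leq A j w) \<in> H A"
proof -
  have "leq A j (jn A a b) \<longleftrightarrow> leq A j a \<or> leq A j b" if "a \<in> car A" "b \<in> car A" for a b
    using prime[OF that] leq_trans[OF j(1) _ _ _ jn_leq1] leq_trans[OF j(1) _ _ _ jn_leq2] that
    by (meson jn_closed)
  moreover have "leq A j (mt A a b) \<longleftrightarrow> leq A j a \<and> leq A j b" if "a \<in> car A" "b \<in> car A" for a b
    using leq_mt[OF that j(1)] leq_trans[OF j(1) _ _ _ mt_leq1] leq_trans[OF j(1) _ _ _ mt_leq2] that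
    by (meson mt_closed)
  ultimately show ?thesis
    unfolding H_def using j leq_bot_iff leq_top by auto
qed

text \<open>A minimal element below x but not below y is join-prime, so its principal filter separates.\<close>
lemma separation:
  assumes x: "x \<in> car A" and y: "y \<in> car A" and nleq: "\<not> leq A x y"
  obtains h where "h \<in> H A" "h x" "\<not> h y"
proof -
  define S where "S = {z\<in>car A. leq A z x \<and> \<not> leq A z y}"
  have "S \<subseteq> car A" "x \<in> S" using x nleq leq_refl unfolding S_def by auto
  then obtain j where "j \<in> S" and minimal: "\<And>z. z \<in> S \<Longrightarrow> leq A z j \<Longrightarrow> z = j"
    using poset_finite_minimal[OF poset_leq finite_car] by blast
  then have j: "j \<in> car A" "leq A j x" "\<not> leq A j y" unfolding S_def by auto
  have below: "leq A z y" if "z \<in> car A" "leq A z j" "z \<noteq> j" for z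
    using minimal[of z] leq_trans[OF that(1) j(1) x that(2) j(2)] that unfolding S_def by blast
  have prime: "leq A j a \<or> leq A j b"
    if ab: "a \<in> car A" "b \<in> car A" "leq A j (jn A a b)" for a b
  proof (rule ccontr)
    assume "\<not> (leq A j a \<or> leq A j b)"
    then have "leq A (mt A j a) y" "leq A (mt A j b) y"
      using below mt_leq1 ab j(1) unfolding leq_def by (metis mt_closed)+
    moreover have "j = jn A (mt A j a) (mt A j b)"
      using ab mt_jn_distrib[OF j(1)] unfolding leq_def by simp
    ultimately show False using jn_leq j y ab by (metis mt_closed)
  qed
  have "j \<noteq> bot A" using j y bot_leq by blast
  then have "(\<lambda>w. w \<in> car A \<and> leq A j w) \<in> H A"
    using principal_filter_in_H[OF j(1)] prime by blast
  then show ?thesis using that x y j by blast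
qed

lemma H_le_poset: "poset (H A) (H_le A)"
  unfolding poset_def H_le_def
proof (intro conjI ballI impI)
  fix g h assume "g \<in> H A" "h \<in> H A" "\<forall>x\<in>car A. g x \<longrightarrow> h x" "\<forall>x\<in>car A. h x \<longrightarrow> g x"
  then show "g = h" using H_outside by (intro ext) metis
qed auto

lemma H_subset_Pow: "H A \<subseteq> (\<lambda>S x. x \<in> S) ` Pow (car A)"
proof
  fix h assume h: "h \<in> H A"
  then have "h = (\<lambda>x. x \<in> {x\<in>car A. h x})" using H_outside by (auto simp: fun_eq_iff)
  then show "h \<in> (\<lambda>S x. x \<in> S) ` Pow (car A)" by blast
qed

lemma finite_H: "finite (H A)"
  using H_subset_Pow finite_car by (meson finite_Pow_iff finite_imageI finite_subset)

lemma card_H_le: "card (H A) \<le> 2 ^ card (car A)"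
proof -
  have "card (H A) \<le> card ((\<lambda>S x. x \<in> S) ` Pow (car A))"
    using H_subset_Pow finite_car by (intro card_mono) auto
  also have "\<dots> \<le> card (Pow (car A))" using finite_car by (intro card_image_le) auto
  finally show ?thesis using finite_car by (simp add: card_Pow)
qed

lemma H_least_true:
  assumes h: "h \<in> H A"
  obtains m where "m \<in> car A" "h m" "\<And>y. y \<in> car A \<Longrightarrow> h y \<Longrightarrow> leq A m y"
proof -
  have "{y\<in>car A. h y} \<subseteq> car A" "top A \<in> {y\<in>car A. h y}" using H_top[OF h] by auto
  then obtain m where "m \<in> {y\<in>car A. h y}"
    and minimal: "\<And>z. z \<in> {y\<in>car A. h y} \<Longrightarrow> leq A z m \<Longrightarrow> z = m"
    by (rule poset_finite_minimal[OF poset_leq finite_car]) blast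
  then have m: "m \<in> car A" "h m" by auto
  have "leq A m y" if y: "y \<in> car A" "h y" for y
  proof -
    have "mt A m y = m"
      by (rule minimal) (use H_mt[OF h m(1) y(1)] mt_leq1[OF m(1) y(1)] m y in auto)
    then show ?thesis unfolding leq_def .
  qed
  then show ?thesis using that m by blast
qed

lemma H_greatest_false:
  assumes h: "h \<in> H A"
  obtains n where "n \<in> car A" "\<not> h n" "\<And>y. y \<in> car A \<Longrightarrow> \<not> h y \<Longrightarrow> leq A y n"
proof -
  have "{y\<in>car A. \<not> h y} \<subseteq> car A" "bot A \<in> {y\<in>car A. \<not> h y}" using H_bot[OF h] by auto
  then obtain n where "n \<in> {y\<in>car A. \<not> h y}"
    and maximal: "\<And>z. z \<in> {y\<in>car A. \<not> h y} \<Longrightarrow> leq A n z \<Longrightarrow> z = n"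
    by (rule poset_finite_minimal[OF poset_dual[OF poset_leq] finite_car]) blast
  then have n: "n \<in> car A" "\<not> h n" by auto
  have "leq A y n" if y: "y \<in> car A" "\<not> h y" for y
  proof -
    have "jn A n y = n"
      by (rule maximal) (use H_jn[OF h n(1) y(1)] jn_leq1[OF n(1) y(1)] n y in auto)
    then show ?thesis using leq_jn_iff[OF y(1) n(1)] jn_comm[OF n(1) y(1)] by simp
  qed
  then show ?thesis using that n by blast
qed

definition rep :: "'a \<Rightarrow> ('a \<Rightarrow> bool) set" where
  "rep x = {h \<in> H A. h x}"

lemma rep_subset: "rep x \<subseteq> H A"
  unfolding rep_def by blast

lemma rep_is_upset: "x \<in> car A \<Longrightarrow> is_upset (H A) (H_le A) (rep x)"
  unfolding is_upset_def rep_def H_le_def by blast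

lemma leq_iff_rep_subset:
  assumes x: "x \<in> car A" and y: "y \<in> car A"
  shows "leq A x y \<longleftrightarrow> rep x \<subseteq> rep y"
proof
  show "leq A x y \<Longrightarrow> rep x \<subseteq> rep y" using H_mono[OF _ x y] unfolding rep_def by blast
next
  assume sub: "rep x \<subseteq> rep y"
  show "leq A x y"
  proof (rule ccontr)
    assume "\<not> leq A x y"
    then obtain h where "h \<in> H A" "h x" "\<not> h y" by (rule separation[OF x y])
    then show False using sub unfolding rep_def by blast
  qed
qed

lemma rep_eq_iff: "x \<in> car A \<Longrightarrow> y \<in> car A \<Longrightarrow> rep x = rep y \<longleftrightarrow> x = y"
  using leq_iff_rep_subset[of x y] leq_iff_rep_subset[of y x] leq_antisym[of x y] by auto

lemma rep_eqI: "x \<in> car A \<Longrightarrow> y \<in> car A \<Longrightarrow> rep x = rep y \<Longrightarrow> x = y"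
  using rep_eq_iff by blast

lemma rep_jn: "x \<in> car A \<Longrightarrow> y \<in> car A \<Longrightarrow> rep (jn A x y) = rep x \<union> rep y"
  unfolding rep_def using H_jn by auto

lemma rep_mt: "x \<in> car A \<Longrightarrow> y \<in> car A \<Longrightarrow> rep (mt A x y) = rep x \<inter> rep y"
  unfolding rep_def using H_mt by auto

lemma rep_bot: "rep (bot A) = {}"
  unfolding rep_def using H_bot by auto

lemma rep_top: "rep (top A) = H A"
  unfolding rep_def using H_top by auto

lemma rep_st: assumes x: "x \<in> car A" shows "rep (st A x) = H A - down (H A) (H_le A) (rep x)"
proof
  show "rep (st A x) \<subseteq> H A - down (H A) (H_le A) (rep x)"
  proof
    fix h assume h: "h \<in> rep (st A x)"
    have "\<not> g x" if "g \<in> H A" "H_le A h g" for g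
      using that h H_mt[of g x "st A x"] H_bot[of g] mt_st_self x unfolding rep_def H_le_def by auto
    then show "h \<in> H A - down (H A) (H_le A) (rep x)" using h unfolding rep_def down_def by blast
  qed
  show "H A - down (H A) (H_le A) (rep x) \<subseteq> rep (st A x)"
  proof
    fix h assume h: "h \<in> H A - down (H A) (H_le A) (rep x)"
    then have hH: "h \<in> H A" by blast
    obtain m where m: "m \<in> car A" "h m" "\<And>y. y \<in> car A \<Longrightarrow> h y \<Longrightarrow> leq A m y"
      using H_least_true[OF hH] by blast
    show "h \<in> rep (st A x)"
    proof (rule ccontr)
      assume "h \<notin> rep (st A x)"
      then have "mt A m x \<noteq> bot A"
        using mt_eq_bot_iff_leq_st[OF x m(1)] mt_comm[OF m(1) x] H_mono[OF hH m(1) st_closed[OF x]] m(2) hH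
        unfolding rep_def by auto
      then obtain g where g: "g \<in> H A" "g (mt A m x)"
        using separation[OF mt_closed[OF m(1) x] bot_closed] leq_bot_iff m(1) x by (metis mt_closed)
      then have "g m" "g x" using H_mt m(1) x by auto
      then have "H_le A h g" "g \<in> rep x"
        using H_mono[OF g(1) m(1)] m(3) g(1) unfolding H_le_def rep_def by auto
      then show False using h g(1) unfolding down_def by blast
    qed
  qed
qed

lemma rep_pl: assumes x: "x \<in> car A" shows "rep (pl A x) = up (H A) (H_le A) (H A - rep x)"
proof
  show "up (H A) (H_le A) (H A - rep x) \<subseteq> rep (pl A x)"
  proof
    fix h assume "h \<in> up (H A) (H_le A) (H A - rep x)"
    then obtain g where g: "g \<in> H A" "\<not> g x" "H_le A g h" "h \<in> H A" unfolding down_def rep_def by blast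
    then have "g (pl A x)" using H_jn[OF g(1) x pl_closed[OF x]] jn_pl_self[OF x] H_top[OF g(1)] by simp
    then show "h \<in> rep (pl A x)" using g x unfolding H_le_def rep_def by simp
  qed
  show "rep (pl A x) \<subseteq> up (H A) (H_le A) (H A - rep x)"
  proof
    fix h assume h: "h \<in> rep (pl A x)"
    then have hH: "h \<in> H A" and hp: "h (pl A x)" unfolding rep_def by blast+
    obtain n where n: "n \<in> car A" "\<not> h n" "\<And>y. y \<in> car A \<Longrightarrow> \<not> h y \<Longrightarrow> leq A y n"
      using H_greatest_false[OF hH] by blast
    have "jn A n x \<noteq> top A"
      using jn_eq_top_iff_pl_leq[OF x n(1)] jn_comm[OF n(1) x] H_mono[OF hH pl_closed[OF x] n(1)] hp n(2)
      by auto
    then obtain g where g: "g \<in> H A" "\<not> g (jn A n x)"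
      using separation[OF top_closed jn_closed[OF n(1) x]] top_leq_iff n(1) x H_top by (metis jn_closed)
    then have "\<not> g n" "\<not> g x" using H_jn n(1) x by auto
    then have "H_le A g h" "g \<notin> rep x"
      using H_mono[OF g(1) _ n(1)] n(3) unfolding H_le_def rep_def by auto
    then show "h \<in> up (H A) (H_le A) (H A - rep x)" using g(1) hH unfolding down_def by blast
  qed
qed

lemma rep_principal:
  assumes h: "h \<in> H A"
  obtains m where "m \<in> car A" "rep m = up (H A) (H_le A) {h}"
proof -
  obtain m where m: "m \<in> car A" "h m" "\<And>y. y \<in> car A \<Longrightarrow> h y \<Longrightarrow> leq A m y"
    using H_least_true[OF h] by blast
  have "rep m = up (H A) (H_le A) {h}"
    using m H_mono[OF _ m(1)] h unfolding rep_def down_def H_le_def by auto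
  then show ?thesis using that m(1) by blast
qed

lemma rep_surj:
  assumes U: "is_upset (H A) (H_le A) U"
  obtains x where "x \<in> car A" "rep x = U"
proof -
  have "\<exists>x\<in>car A. rep x = up (H A) (H_le A) S" if "finite S" "S \<subseteq> H A" for S
    using that
  proof (induction S rule: finite_induct)
    case empty
    then show ?case using rep_bot by auto
  next
    case (insert s S)
    then obtain x where x: "x \<in> car A" "rep x = up (H A) (H_le A) S" by blast
    obtain m where "m \<in> car A" "rep m = up (H A) (H_le A) {s}"
      using rep_principal insert.prems by blast
    then show ?case
      using x rep_jn[OF x(1)] down_Un[of "H A" _ S "{s}"] by (intro bexI[of _ "jn A x m"]) auto
  qed
  moreover have "U \<subseteq> H A" using U unfolding is_upset_def by blast
  ultimately show ?thesis
    using that up_eq_self[OF H_le_poset U] finite_subset[OF _ finite_H] by metis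
qed

end

section \<open>Congruences\<close>

lemma teval_closed:
  "alg_closed A \<Longrightarrow> x \<in> car A \<Longrightarrow> y \<in> car A \<Longrightarrow> z \<in> car A \<Longrightarrow> teval A x y z t \<in> car A"
  by (induction t) (auto simp: alg_closed_def)

lemma congruenceD:
  assumes "congruence A \<theta>"
  shows "\<theta> \<subseteq> car A \<times> car A" "\<And>x. x \<in> car A \<Longrightarrow> (x,x) \<in> \<theta>"
    "\<And>x y. (x,y) \<in> \<theta> \<Longrightarrow> (y,x) \<in> \<theta>" "\<And>x y z. (x,y) \<in> \<theta> \<Longrightarrow> (y,z) \<in> \<theta> \<Longrightarrow> (x,z) \<in> \<theta>"
    "\<And>x x' y y'. (x,x') \<in> \<theta> \<Longrightarrow> (y,y') \<in> \<theta> \<Longrightarrow> (jn A x y, jn A x' y') \<in> \<theta>"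
    "\<And>x x' y y'. (x,x') \<in> \<theta> \<Longrightarrow> (y,y') \<in> \<theta> \<Longrightarrow> (mt A x y, mt A x' y') \<in> \<theta>"
    "\<And>x x'. (x,x') \<in> \<theta> \<Longrightarrow> (st A x, st A x') \<in> \<theta>"
    "\<And>x x'. (x,x') \<in> \<theta> \<Longrightarrow> (pl A x, pl A x') \<in> \<theta>"
  using assms unfolding congruence_def equiv_def refl_on_def sym_def trans_def by blast+

lemma teval_congruence:
  assumes alg: "alg_closed A" and \<theta>: "congruence A \<theta>"
    and "(x,x') \<in> \<theta>" "(y,y') \<in> \<theta>" "(z,z') \<in> \<theta>"
  shows "(teval A x y z t, teval A x' y' z' t) \<in> \<theta>"
proof -
  have "bot A \<in> car A" "top A \<in> car A" using alg unfolding alg_closed_def by auto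
  then show ?thesis
    by (induction t) (simp_all add: assms(3-) congruenceD(2,5-8)[OF \<theta>])
qed

lemma congruence_kernel:
  assumes alg: "alg_closed A"
    and jn_mt: "\<And>x x' y y'. x \<in> car A \<Longrightarrow> x' \<in> car A \<Longrightarrow> y \<in> car A \<Longrightarrow> y' \<in> car A \<Longrightarrow>
      \<kappa> x = \<kappa> x' \<Longrightarrow> \<kappa> y = \<kappa> y' \<Longrightarrow> \<kappa> (jn A x y) = \<kappa> (jn A x' y') \<and> \<kappa> (mt A x y) = \<kappa> (mt A x' y')"
    and st_pl: "\<And>x x'. x \<in> car A \<Longrightarrow> x' \<in> car A \<Longrightarrow>
      \<kappa> x = \<kappa> x' \<Longrightarrow> \<kappa> (st A x) = \<kappa> (st A x') \<and> \<kappa> (pl A x) = \<kappa> (pl A x')"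
  shows "congruence A {(x,y). x \<in> car A \<and> y \<in> car A \<and> \<kappa> x = \<kappa> y}"
  using alg jn_mt st_pl unfolding congruence_def equiv_def refl_on_def sym_def trans_def alg_closed_def
  by auto

lemma discr_term_imp_simple:
  assumes alg: "alg_closed A" and t: "is_discr_term t A"
  shows "simple A"
proof -
  have full: "\<theta> = car A \<times> car A" if \<theta>: "congruence A \<theta>" and ab: "(a,b) \<in> \<theta>" "a \<noteq> b" for \<theta> a b
  proof -
    have a: "a \<in> car A" "b \<in> car A" using ab congruenceD(1)[OF \<theta>] by auto
    have "(z, a) \<in> \<theta>" if z: "z \<in> car A" for z
    proof -
      have "(teval A a a z t, teval A a b z t) \<in> \<theta>"
        by (rule teval_congruence[OF alg \<theta> congruenceD(2)[OF \<theta> a(1)] ab(1) congruenceD(2)[OF \<theta> z]])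
      moreover have "teval A a a z t = z" "teval A a b z t = a"
        using t a z ab(2) unfolding is_discr_term_def discr_def by auto
      ultimately show ?thesis by simp
    qed
    then show ?thesis using congruenceD(1,3,4)[OF \<theta>] by blast
  qed
  have "congruence A \<theta> \<longleftrightarrow> \<theta> = Id_on (car A) \<or> \<theta> = car A \<times> car A" for \<theta>
  proof
    assume \<theta>: "congruence A \<theta>"
    show "\<theta> = Id_on (car A) \<or> \<theta> = car A \<times> car A"
    proof (cases "\<exists>a b. (a,b) \<in> \<theta> \<and> a \<noteq> b")
      case True
      then show ?thesis using full[OF \<theta>] by blast
    next
      case False
      then show ?thesis using congruenceD(1,2)[OF \<theta>] by (auto simp: Id_on_def)
    qed
  next
    assume "\<theta> = Id_on (car A) \<or> \<theta> = car A \<times> car A"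
    then show "congruence A \<theta>"
      using alg unfolding congruence_def equiv_def refl_on_def sym_def trans_def alg_closed_def Id_on_def
      by auto
  qed
  then show ?thesis unfolding simple_def by auto
qed

lemma simpleD: "simple A \<Longrightarrow> congruence A \<theta> \<Longrightarrow> \<theta> = Id_on (car A) \<or> \<theta> = car A \<times> car A"
  unfolding simple_def by (metis (no_types) insert_iff empty_iff mem_Collect_eq)

lemma simple_kernel_cases:
  assumes "simple A" "congruence A {(x,y). x \<in> car A \<and> y \<in> car A \<and> \<kappa> x = \<kappa> y}"
  shows "inj_on \<kappa> (car A) \<or> (\<forall>x\<in>car A. \<forall>y\<in>car A. \<kappa> x = \<kappa> y)"
  using simpleD[OF assms]
proof
  assume eq: "{(x,y). x \<in> car A \<and> y \<in> car A \<and> \<kappa> x = \<kappa> y} = Id_on (car A)"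
  have "x = y" if "x \<in> car A" "y \<in> car A" "\<kappa> x = \<kappa> y" for x y
    using that eq[THEN equalityD1] unfolding Id_on_def by blast
  then show ?thesis unfolding inj_on_def by blast
next
  assume "{(x,y). x \<in> car A \<and> y \<in> car A \<and> \<kappa> x = \<kappa> y} = car A \<times> car A"
  then show ?thesis by blast
qed

section \<open>Regularity and the shape of the dual\<close>

lemma not_max_or_minE:
  assumes "\<not> max_or_min X le"
  obtains h g1 g0 where "h \<in> X" "g1 \<in> X" "le h g1" "g1 \<noteq> h" "g0 \<in> X" "le g0 h" "g0 \<noteq> h"
  using assms unfolding max_or_min_def is_maximal_def is_minimal_def by blast

lemma maximal_in_down_iff:
  assumes "poset X le" "is_maximal X le h" "S \<subseteq> X"
  shows "h \<in> down X le S \<longleftrightarrow> h \<in> S"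
  using assms unfolding poset_def is_maximal_def down_def by blast

lemma minimal_in_up_iff:
  assumes "poset X le" "is_minimal X le h" "S \<subseteq> X"
  shows "h \<in> up X le S \<longleftrightarrow> h \<in> S"
  using assms unfolding poset_def is_minimal_def down_def by blast

context fin_ddp_algebra
begin

text \<open>Removing a non-maximal point from an up-set does not change its down-closure, hence
  not its pseudocomplement; dually for non-minimal points and dual pseudocomplements.\<close>
lemma st_eq_if_rep_agree_off:
  assumes x: "x \<in> car A" and y: "y \<in> car A" and agree: "rep x - {h} = rep y - {h}"
    and h: "h \<in> H A" and g: "g \<in> H A" "H_le A h g" "g \<noteq> h"
  shows "st A x = st A y"
proof -
  have "down (H A) (H_le A) (rep x) = down (H A) (H_le A) (rep y)"
    by (rule down_eq_if_upsets_agree_off[OF H_le_poset rep_is_upset[OF x] rep_is_upset[OF y] agree h g])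
  then show ?thesis using rep_st x y rep_eq_iff by (metis st_closed)
qed

lemma pl_eq_if_rep_agree_off:
  assumes x: "x \<in> car A" and y: "y \<in> car A" and agree: "rep x - {h} = rep y - {h}"
    and h: "h \<in> H A" and g: "g \<in> H A" "H_le A g h" "g \<noteq> h"
  shows "pl A x = pl A y"
proof -
  have "(H A - rep x) - {h} = (H A - rep y) - {h}" using agree by blast
  then have "up (H A) (H_le A) (H A - rep x) = up (H A) (H_le A) (H A - rep y)"
    using down_eq_if_upsets_agree_off[OF poset_dual[OF H_le_poset]
        is_upset_Diff[OF rep_is_upset[OF x]] is_upset_Diff[OF rep_is_upset[OF y]] _ h g(1)] g(2,3)
    by blast
  then show ?thesis using rep_pl x y rep_eq_iff by (metis pl_closed)
qed

lemma rep_agree_off_pair: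
  assumes h: "h \<in> H A"
  obtains a b where "a \<in> car A" "b \<in> car A" "a \<noteq> b" "rep a - {h} = rep b - {h}"
proof -
  define U where "U = up (H A) (H_le A) {h}"
  have U: "is_upset (H A) (H_le A) U"
    unfolding U_def using down_is_downset[OF poset_dual[OF H_le_poset]] h by simp
  have hU: "h \<in> U"
    unfolding U_def using subset_down[OF poset_dual[OF H_le_poset]] h by blast
  have "is_upset (H A) (H_le A) (U - {h})"
    using U H_le_poset h unfolding U_def is_upset_def poset_def down_def by blast
  moreover obtain a where "a \<in> car A" "rep a = U" using rep_surj[OF U] by blast
  ultimately obtain b where "b \<in> car A" "rep b = U - {h}" using rep_surj by blast
  then show ?thesis using that \<open>a \<in> car A\<close> \<open>rep a = U\<close> hU by blast
qed

lemma regular_imp_max_or_min: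
  assumes "regular A"
  shows "max_or_min (H A) (H_le A)"
proof (rule ccontr)
  assume "\<not> max_or_min (H A) (H_le A)"
  then obtain h g1 g0 where h: "h \<in> H A" and g1: "g1 \<in> H A" "H_le A h g1" "g1 \<noteq> h"
    and g0: "g0 \<in> H A" "H_le A g0 h" "g0 \<noteq> h"
    by (rule not_max_or_minE)
  obtain a b where ab: "a \<in> car A" "b \<in> car A" "a \<noteq> b" "rep a - {h} = rep b - {h}"
    using rep_agree_off_pair[OF h] by blast
  have "st A a = st A b" using st_eq_if_rep_agree_off[OF ab(1,2,4) h g1] .
  moreover have "pl A a = pl A b" using pl_eq_if_rep_agree_off[OF ab(1,2,4) h g0] .
  ultimately show False using assms ab unfolding regular_def by blast
qed

lemma simple_imp_max_or_min:
  assumes "simple A"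
  shows "max_or_min (H A) (H_le A)"
proof (rule ccontr)
  assume "\<not> max_or_min (H A) (H_le A)"
  then obtain h g1 g0 where h: "h \<in> H A" and g1: "g1 \<in> H A" "H_le A h g1" "g1 \<noteq> h"
    and g0: "g0 \<in> H A" "H_le A g0 h" "g0 \<noteq> h"
    by (rule not_max_or_minE)
  define \<kappa> where "\<kappa> x = rep x - {h}" for x
  have "congruence A {(x,y). x \<in> car A \<and> y \<in> car A \<and> \<kappa> x = \<kappa> y}"
  proof (rule congruence_kernel[OF alg_closed])
    fix x x' y y' assume "x \<in> car A" "x' \<in> car A" "y \<in> car A" "y' \<in> car A" "\<kappa> x = \<kappa> x'" "\<kappa> y = \<kappa> y'"
    then show "\<kappa> (jn A x y) = \<kappa> (jn A x' y') \<and> \<kappa> (mt A x y) = \<kappa> (mt A x' y')"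
      unfolding \<kappa>_def using rep_jn rep_mt by auto
  next
    fix x x' assume x: "x \<in> car A" "x' \<in> car A" and "\<kappa> x = \<kappa> x'"
    then have agree: "rep x - {h} = rep x' - {h}" unfolding \<kappa>_def by simp
    show "\<kappa> (st A x) = \<kappa> (st A x') \<and> \<kappa> (pl A x) = \<kappa> (pl A x')"
      using st_eq_if_rep_agree_off[OF x agree h g1] pl_eq_if_rep_agree_off[OF x agree h g0] by simp
  qed
  then consider "inj_on \<kappa> (car A)" | "\<forall>x\<in>car A. \<forall>y\<in>car A. \<kappa> x = \<kappa> y"
    using simple_kernel_cases[OF assms] by blast
  then show False
  proof cases
    case 1
    obtain a b where "a \<in> car A" "b \<in> car A" "a \<noteq> b" "\<kappa> a = \<kappa> b"
      using rep_agree_off_pair[OF h] unfolding \<kappa>_def by blast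
    then show False using inj_onD[OF 1] by blast
  next
    case 2
    then have "\<kappa> (bot A) = \<kappa> (top A)" by simp
    then show False using g1 rep_bot rep_top unfolding \<kappa>_def by auto
  qed
qed

lemma max_or_min_imp_regular:
  assumes mm: "max_or_min (H A) (H_le A)"
  shows "regular A"
  unfolding regular_def
proof (intro ballI impI)
  fix a b assume ab: "a \<in> car A" "b \<in> car A" and eq: "st A a = st A b \<and> pl A a = pl A b"
  then have down_eq: "down (H A) (H_le A) (rep a) = down (H A) (H_le A) (rep b)"
    using rep_st down_subset by (metis Diff_Diff_Int inf.absorb2)
  have up_eq: "up (H A) (H_le A) (H A - rep a) = up (H A) (H_le A) (H A - rep b)"
    using rep_pl ab eq by metis
  have "h \<in> rep a \<longleftrightarrow> h \<in> rep b" if h: "h \<in> H A" for h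
  proof (cases "is_maximal (H A) (H_le A) h")
    case True
    then show ?thesis
      using maximal_in_down_iff[OF H_le_poset True rep_subset] down_eq by blast
  next
    case False
    then have "is_minimal (H A) (H_le A) h" using mm h unfolding max_or_min_def by blast
    then show ?thesis
      using minimal_in_up_iff[OF H_le_poset _ Diff_subset] up_eq h by blast
  qed
  then have "rep a = rep b" using rep_subset by blast
  then show "a = b" using rep_eq_iff ab by blast
qed

end

section \<open>Direct decompositions\<close>

lemma prod_alg_simps:
  "car (prod_alg B C) = car B \<times> car C"
  "jn (prod_alg B C) p q = (jn B (fst p) (fst q), jn C (snd p) (snd q))"
  "mt (prod_alg B C) p q = (mt B (fst p) (fst q), mt C (snd p) (snd q))"
  "st (prod_alg B C) p = (st B (fst p), st C (snd p))"
  "pl (prod_alg B C) p = (pl B (fst p), pl C (snd p))"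
  "bot (prod_alg B C) = (bot B, bot C)"
  "top (prod_alg B C) = (top B, top C)"
  by (simp_all add: prod_alg_def split_beta)

lemma is_hom_pair: "is_hom f A B \<Longrightarrow> is_hom g A C \<Longrightarrow> is_hom (\<lambda>x. (f x, g x)) A (prod_alg B C)"
  unfolding is_hom_def prod_alg_simps by auto

text \<open>For central u (rep u closed both ways) meeting with u yields the pseudocomplement and the
  dual pseudocomplement of the interval below u.\<close>
definition ideal_alg :: "'a dpa \<Rightarrow> 'a \<Rightarrow> 'a dpa" where
  "ideal_alg A u = \<lparr> car = {x\<in>car A. leq A x u}, jn = jn A, mt = mt A,
     st = (\<lambda>x. mt A (st A x) u), pl = (\<lambda>x. mt A (pl A x) u), bot = bot A, top = u \<rparr>"

context fin_ddp_algebra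
begin

lemma hom_onto_prod_top_ne_bot:
  assumes hom: "is_hom f A (prod_alg B C)"
    and onto: "f ` car A = car B \<times> car C" and B: "nontrivial B" and C: "nontrivial C"
  shows "top B \<noteq> bot B" "top C \<noteq> bot C"
proof -
  have laws: "mt B b (top B) = b \<and> mt B b (bot B) = bot B \<and> mt C c (top C) = c \<and> mt C c (bot C) = bot C"
    if "b \<in> car B" "c \<in> car C" for b c
  proof -
    have "(b, c) \<in> f ` car A" using onto that by simp
    then obtain x where x: "x \<in> car A" "f x = (b, c)" by (metis imageE)
    have "f (mt A x (top A)) = (mt B b (top B), mt C c (top C))"
      "f (mt A x (bot A)) = (mt B b (bot B), mt C c (bot C))" "f (bot A) = (bot B, bot C)"
      using hom x unfolding is_hom_def prod_alg_simps by auto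
    then show ?thesis using x mt_top mt_bot by auto
  qed
  obtain b b' c c' where b: "b \<in> car B" "b' \<in> car B" "b \<noteq> b'"
    and c: "c \<in> car C" "c' \<in> car C" "c \<noteq> c'"
    using B C unfolding nontrivial_def by blast
  show "top B \<noteq> bot B"
  proof
    assume "top B = bot B"
    then have "b = bot B" "b' = bot B" using laws[OF b(1) c(1)] laws[OF b(2) c(1)] by metis+
    then show False using b(3) by simp
  qed
  show "top C \<noteq> bot C"
  proof
    assume "top C = bot C"
    then have "c = bot C" "c' = bot C" using laws[OF b(1) c(1)] laws[OF b(1) c(2)] by metis+
    then show False using c(3) by simp
  qed
qed

lemma ideal_alg_closed:
  assumes u: "u \<in> car A"
  shows "alg_closed (ideal_alg A u)"
proof -
  have "leq A (mt A x y) u" if "x \<in> car A" "y \<in> car A" "leq A x u" for x y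
    using leq_trans[OF _ that(1) u mt_leq1[OF that(1,2)]] that by simp
  then show ?thesis
    unfolding alg_closed_def ideal_alg_def using u jn_leq mt_leq2 bot_leq leq_refl by auto
qed

lemma ideal_alg_nontrivial:
  assumes "u \<in> car A" "u \<noteq> bot A"
  shows "nontrivial (ideal_alg A u)"
proof -
  have "bot A \<in> car (ideal_alg A u)" "u \<in> car (ideal_alg A u)"
    using assms bot_leq leq_refl by (auto simp: ideal_alg_def)
  then show ?thesis using assms unfolding nontrivial_def by blast
qed

lemma mt_right_is_hom:
  assumes u: "u \<in> car A" and down: "is_downset (H A) (H_le A) (rep u)"
  shows "is_hom (\<lambda>x. mt A x u) A (ideal_alg A u)"
proof -
  have up: "is_upset (H A) (H_le A) (rep u)" using rep_is_upset[OF u] .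
  have "mt A (st A (mt A x u)) u = mt A (st A x) u" if x: "x \<in> car A" for x
    by (rule rep_eqI) (use x u Diff_down_Int_upset[OF up rep_subset, of x] in \<open>simp_all add: rep_mt rep_st\<close>)
  moreover have "mt A (pl A (mt A x u)) u = mt A (pl A x) u" if x: "x \<in> car A" for x
    by (rule rep_eqI) (use x u up_Diff_Int_downset[OF down, of "rep x"] in \<open>simp_all add: rep_mt rep_pl\<close>)
  moreover have "mt A (jn A x y) u = jn A (mt A x u) (mt A y u)" if "x \<in> car A" "y \<in> car A" for x y
    by (rule rep_eqI) (use that u in \<open>simp_all add: rep_jn rep_mt Int_Un_distrib2\<close>)
  moreover have "mt A (mt A x y) u = mt A (mt A x u) (mt A y u)" if "x \<in> car A" "y \<in> car A" for x y
    by (rule rep_eqI) (use that u in \<open>auto simp: rep_mt\<close>)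
  moreover have "mt A (bot A) u = bot A" "mt A (top A) u = u"
    using u mt_bot mt_comm mt_top by simp_all
  ultimately show ?thesis
    unfolding is_hom_def ideal_alg_def using mt_leq2 u by auto
qed

lemma updown_closed_split_iso:
  assumes up: "is_upset (H A) (H_le A) E" and down: "is_downset (H A) (H_le A) E"
  obtains e e' where "e \<in> car A" "e' \<in> car A" "rep e = E" "rep e' = H A - E"
    "is_iso (\<lambda>x. (mt A x e, mt A x e')) A (prod_alg (ideal_alg A e) (ideal_alg A e'))"
proof -
  have up': "is_upset (H A) (H_le A) (H A - E)" and down': "is_downset (H A) (H_le A) (H A - E)"
    using is_upset_Diff[OF down] is_upset_Diff[OF up] by simp_all
  obtain e where e: "e \<in> car A" "rep e = E" using rep_surj[OF up] by blast
  obtain e' where e': "e' \<in> car A" "rep e' = H A - E" using rep_surj[OF up'] by blast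
  define f where "f x = (mt A x e, mt A x e')" for x
  have hom: "is_hom f A (prod_alg (ideal_alg A e) (ideal_alg A e'))"
    unfolding f_def by (intro is_hom_pair mt_right_is_hom) (use e e' down down' in simp_all)
  have "inj_on f (car A)"
  proof (rule inj_onI)
    fix x y assume x: "x \<in> car A" and y: "y \<in> car A" and "f x = f y"
    then have "rep (mt A x e) = rep (mt A y e)" "rep (mt A x e') = rep (mt A y e')"
      unfolding f_def by simp_all
    then have "rep x \<inter> E = rep y \<inter> E" "rep x \<inter> (H A - E) = rep y \<inter> (H A - E)"
      using rep_mt x y e e' by simp_all
    then have "rep x = rep y" using rep_subset[of x] rep_subset[of y] by blast
    then show "x = y" using rep_eqI x y by blast
  qed
  moreover have "(b, c) \<in> f ` car A" if b: "b \<in> car A" "leq A b e" and c: "c \<in> car A" "leq A c e'" for b c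
  proof -
    have "rep b \<subseteq> E" "rep c \<subseteq> H A - E" using b c leq_iff_rep_subset e e' by auto
    then have "rep (mt A (jn A b c) e) = rep b" "rep (mt A (jn A b c) e') = rep c"
      using b c e e' rep_mt rep_jn by auto
    then have "f (jn A b c) = (b, c)" unfolding f_def using rep_eqI b c e e' by simp
    then show ?thesis using b c by (metis imageI jn_closed)
  qed
  ultimately have "bij_betw f (car A) (car (prod_alg (ideal_alg A e) (ideal_alg A e')))"
    using hom unfolding bij_betw_def is_hom_def prod_alg_simps ideal_alg_def by auto
  then show ?thesis using that e e' hom unfolding is_iso_def f_def by blast
qed

lemma updown_closed_imp_not_di:
  assumes "is_upset (H A) (H_le A) E" "is_downset (H A) (H_le A) E" "E \<noteq> {}" "E \<noteq> H A"
  shows "\<not> directly_indecomposable A"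
proof -
  obtain e e' where e: "e \<in> car A" "e' \<in> car A" "rep e = E" "rep e' = H A - E"
    and iso: "is_iso (\<lambda>x. (mt A x e, mt A x e')) A (prod_alg (ideal_alg A e) (ideal_alg A e'))"
    using updown_closed_split_iso[OF assms(1,2)] by blast
  have "e \<noteq> bot A" "e' \<noteq> bot A"
    using e assms(1,3,4) rep_bot unfolding is_upset_def by auto
  then show ?thesis
    unfolding directly_indecomposable_def
    using iso e ideal_alg_closed ideal_alg_nontrivial by blast
qed

lemma di_imp_connected: "directly_indecomposable A \<Longrightarrow> poset_connected (H A) (H_le A)"
  using not_connected_updown_closed updown_closed_imp_not_di by metis

lemma iso_prod_complemented_element:
  assumes iso: "is_iso f A (prod_alg B C)" and B: "nontrivial B" and C: "nontrivial C"
  obtains e where "e \<in> car A" "e \<noteq> bot A" "e \<noteq> top A" "jn A e (st A e) = top A"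
proof -
  have hom: "is_hom f A (prod_alg B C)" and inj: "inj_on f (car A)"
    and onto: "f ` car A = car B \<times> car C"
    using iso unfolding is_iso_def bij_betw_def prod_alg_simps by auto
  have ne: "top B \<noteq> bot B" "top C \<noteq> bot C"
    using hom_onto_prod_top_ne_bot[OF hom onto B C] by blast+
  have f_jn: "f (jn A x y) = (jn B (fst (f x)) (fst (f y)), jn C (snd (f x)) (snd (f y)))"
    and f_st: "f (st A x) = (st B (fst (f x)), st C (snd (f x)))"
    if "x \<in> car A" "y \<in> car A" for x y
    using hom that unfolding is_hom_def prod_alg_simps by auto
  have f_bot: "f (bot A) = (bot B, bot C)" and f_top: "f (top A) = (top B, top C)"
    using hom unfolding is_hom_def prod_alg_simps by auto
  have "(top B, bot C) \<in> car B \<times> car C"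
    using onto f_bot f_top imageI[OF bot_closed, of f] imageI[OF top_closed, of f] by auto
  then obtain e where e: "e \<in> car A" "f e = (top B, bot C)" using onto by (metis imageE)
  have "st B (top B) = bot B" "st C (bot C) = top C"
    using f_st[of "top A" "top A"] f_st[of "bot A" "bot A"] st_top st_bot f_bot f_top by auto
  moreover have "jn B (top B) (bot B) = top B" "jn C (bot C) (top C) = top C"
    using f_jn[of "top A" "bot A"] f_jn[of "bot A" "top A"] jn_bot jn_top f_bot f_top by auto
  ultimately have "f (jn A e (st A e)) = f (top A)"
    using f_jn[of e "st A e"] f_st[of e e] e f_top by simp
  then have "jn A e (st A e) = top A" using inj_onD[OF inj] e by simp
  moreover have "e \<noteq> bot A" "e \<noteq> top A" using e f_bot f_top ne by auto
  ultimately show ?thesis using that e by blast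
qed

lemma complemented_rep_is_downset:
  assumes e: "e \<in> car A" and compl: "jn A e (st A e) = top A"
  shows "is_downset (H A) (H_le A) (rep e)"
proof -
  have "rep e \<union> (H A - down (H A) (H_le A) (rep e)) = H A"
    using rep_jn[of e "st A e"] rep_st e compl rep_top by simp
  then show ?thesis using rep_subset unfolding is_upset_def down_def by blast
qed

lemma connected_imp_di:
  assumes conn: "poset_connected (H A) (H_le A)"
  shows "directly_indecomposable A"
  unfolding directly_indecomposable_def
proof
  assume "\<exists>B C. \<exists>f :: 'a \<Rightarrow> 'a \<times> 'a. alg_closed B \<and> alg_closed C \<and> nontrivial B \<and> nontrivial C \<and>
            is_iso f A (prod_alg B C)"
  then obtain e where e: "e \<in> car A" "e \<noteq> bot A" "e \<noteq> top A" "jn A e (st A e) = top A"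
    using iso_prod_complemented_element by metis
  have "rep e \<noteq> {}" using e(1,2) rep_bot rep_eq_iff[OF e(1) bot_closed] by simp
  then have "rep e = H A"
    using connected_updown_closed_eq[OF conn rep_is_upset[OF e(1)] complemented_rep_is_downset[OF e(1,4)]]
    by blast
  then show False using e(1,3) rep_top rep_eq_iff[OF e(1) top_closed] by simp
qed

lemma simple_imp_di:
  assumes simple: "simple A"
  shows "directly_indecomposable A"
  unfolding directly_indecomposable_def
proof
  assume "\<exists>B C. \<exists>f :: 'a \<Rightarrow> 'a \<times> 'a. alg_closed B \<and> alg_closed C \<and> nontrivial B \<and> nontrivial C \<and>
            is_iso f A (prod_alg B C)"
  then obtain B C and f :: "'a \<Rightarrow> 'a \<times> 'a" where B: "nontrivial B" and C: "nontrivial C"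
    and iso: "is_iso f A (prod_alg B C)" by blast
  have hom: "is_hom f A (prod_alg B C)" and onto: "f ` car A = car B \<times> car C"
    using iso unfolding is_iso_def bij_betw_def prod_alg_simps by auto
  define \<kappa> where "\<kappa> x = fst (f x)" for x
  have "congruence A {(x,y). x \<in> car A \<and> y \<in> car A \<and> \<kappa> x = \<kappa> y}"
    by (rule congruence_kernel[OF alg_closed]) (use hom in \<open>simp_all add: \<kappa>_def is_hom_def prod_alg_simps\<close>)
  then consider "inj_on \<kappa> (car A)" | "\<forall>x\<in>car A. \<forall>y\<in>car A. \<kappa> x = \<kappa> y"
    using simple_kernel_cases[OF simple] by blast
  then show False
  proof cases
    case 1
    obtain b c c' where "b \<in> car B" "c \<in> car C" "c' \<in> car C" "c \<noteq> c'"
      using B C unfolding nontrivial_def by blast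
    then have "(b, c) \<in> f ` car A" "(b, c') \<in> f ` car A" using onto by simp_all
    then obtain x x' where "x \<in> car A" "x' \<in> car A" "f x = (b, c)" "f x' = (b, c')"
      by (metis imageE)
    then show False using inj_onD[OF 1, of x x'] \<open>c \<noteq> c'\<close> unfolding \<kappa>_def by auto
  next
    case 2
    obtain b b' c where "b \<in> car B" "b' \<in> car B" "b \<noteq> b'" "c \<in> car C"
      using B C unfolding nontrivial_def by blast
    then have "(b, c) \<in> f ` car A" "(b', c) \<in> f ` car A" using onto by simp_all
    then obtain x x' where "x \<in> car A" "x' \<in> car A" "f x = (b, c)" "f x' = (b', c)"
      by (metis imageE)
    then show False using 2 \<open>b \<noteq> b'\<close> unfolding \<kappa>_def by force
  qed
qed

end

section \<open>A common discriminator term\<close>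

text \<open>st_test is 0 iff x and y have the same pseudocomplement, pl_test is 1 iff they have the same
  dual pseudocomplement, so in a regular algebra eq_test is 1 if x = y and below 1 otherwise.
  Each application of t \<mapsto> st (pl t) replaces the complement of rep t by its zigzag closure; on a
  connected dual, card (H A) steps push every value below 1 down to 0, and discr_term n then selects
  z or x accordingly.\<close>
definition st_test :: tterm where
  "st_test = TJn (TMt (TSt VX) (TSt (TSt VY))) (TMt (TSt VY) (TSt (TSt VX)))"

definition pl_test :: tterm where
  "pl_test = TMt (TJn (TPl VX) (TPl (TPl VY))) (TJn (TPl VY) (TPl (TPl VX)))"

definition eq_test :: tterm where
  "eq_test = TMt (TSt st_test) pl_test"

definition eq_test_iter :: "nat \<Rightarrow> tterm" where
  "eq_test_iter n = ((\<lambda>t. TSt (TPl t)) ^^ n) eq_test"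

definition discr_term :: "nat \<Rightarrow> tterm" where
  "discr_term n = TJn (TMt VZ (eq_test_iter n)) (TMt VX (TSt (eq_test_iter n)))"

context fin_ddp_algebra
begin

lemma mt_st_st_st_eq_bot_iff:
  "x \<in> car A \<Longrightarrow> y \<in> car A \<Longrightarrow> mt A (st A x) (st A (st A y)) = bot A \<longleftrightarrow> leq A (st A x) (st A y)"
  using mt_eq_bot_iff_leq_st[of "st A (st A y)" "st A x"] mt_comm st_st_st by simp

lemma jn_pl_pl_pl_eq_top_iff:
  "x \<in> car A \<Longrightarrow> y \<in> car A \<Longrightarrow> jn A (pl A x) (pl A (pl A y)) = top A \<longleftrightarrow> leq A (pl A y) (pl A x)"
  using jn_eq_top_iff_pl_leq[of "pl A (pl A y)" "pl A x"] jn_comm pl_pl_pl by simp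

lemma teval_st_test:
  assumes "x \<in> car A" "y \<in> car A"
  shows "teval A x y z st_test = bot A \<longleftrightarrow> st A x = st A y"
proof -
  have "teval A x y z st_test = jn A (mt A (st A x) (st A (st A y))) (mt A (st A y) (st A (st A x)))"
    unfolding st_test_def by simp
  then have "teval A x y z st_test = bot A \<longleftrightarrow> leq A (st A x) (st A y) \<and> leq A (st A y) (st A x)"
    using jn_eq_bot_iff mt_st_st_st_eq_bot_iff assms by simp
  then show ?thesis using leq_antisym leq_refl assms by (metis st_closed)
qed

lemma teval_pl_test:
  assumes "x \<in> car A" "y \<in> car A"
  shows "teval A x y z pl_test = top A \<longleftrightarrow> pl A x = pl A y"
proof -
  have "teval A x y z pl_test = mt A (jn A (pl A x) (pl A (pl A y))) (jn A (pl A y) (pl A (pl A x)))"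
    unfolding pl_test_def by simp
  then have "teval A x y z pl_test = top A \<longleftrightarrow> leq A (pl A y) (pl A x) \<and> leq A (pl A x) (pl A y)"
    using mt_eq_top_iff jn_pl_pl_pl_eq_top_iff assms by simp
  then show ?thesis using leq_antisym leq_refl assms by (metis pl_closed)
qed

lemma teval_eq_test:
  assumes reg: "regular A" and xy: "x \<in> car A" "y \<in> car A" and z: "z \<in> car A"
  shows "teval A x y z eq_test = top A \<longleftrightarrow> x = y"
proof -
  let ?a = "teval A x y z st_test" and ?b = "teval A x y z pl_test"
  have "?a \<in> car A" "?b \<in> car A" using teval_closed[OF alg_closed] xy z by blast+
  moreover have "teval A x y z eq_test = mt A (st A ?a) ?b" unfolding eq_test_def by simp
  ultimately have "teval A x y z eq_test = top A \<longleftrightarrow> ?a = bot A \<and> ?b = top A"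
    using mt_eq_top_iff st_eq_top_iff by simp
  also have "\<dots> \<longleftrightarrow> x = y"
    using teval_st_test[OF xy] teval_pl_test[OF xy] reg xy unfolding regular_def by blast
  finally show ?thesis .
qed

lemma rep_st_pl: "u \<in> car A \<Longrightarrow> rep (st A (pl A u)) = H A - zigzag (H A) (H_le A) (H A - rep u)"
  unfolding zigzag_def using rep_st rep_pl by simp

lemma rep_teval_eq_test_iter:
  assumes "x \<in> car A" "y \<in> car A" "z \<in> car A"
  shows "rep (teval A x y z (eq_test_iter n))
    = H A - (zigzag (H A) (H_le A) ^^ n) (H A - rep (teval A x y z eq_test))"
proof (induction n)
  case 0
  then show ?case unfolding eq_test_iter_def using rep_subset by auto
next
  case (Suc n)
  let ?u = "teval A x y z (eq_test_iter n)"
  have "?u \<in> car A" using teval_closed[OF alg_closed] assms by blast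
  then have "rep (teval A x y z (eq_test_iter (Suc n))) = H A - zigzag (H A) (H_le A) (H A - rep ?u)"
    unfolding eq_test_iter_def using rep_st_pl by simp
  also have "H A - rep ?u = (zigzag (H A) (H_le A) ^^ n) (H A - rep (teval A x y z eq_test))"
    using Suc.IH funpow_zigzag_subset[OF Diff_subset] by (metis Diff_Diff_Int Diff_subset inf.absorb2)
  finally show ?case by simp
qed

lemma is_discr_term_discr_term:
  assumes reg: "regular A" and conn: "poset_connected (H A) (H_le A)" and n: "card (H A) \<le> n"
  shows "is_discr_term (discr_term n) A"
  unfolding is_discr_term_def
proof (intro ballI)
  fix x y z assume xyz: "x \<in> car A" "y \<in> car A" "z \<in> car A"
  define u where "u = teval A x y z (eq_test_iter n)"
  have u: "u \<in> car A" using teval_closed[OF alg_closed] xyz unfolding u_def by blast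
  have rep_u: "rep u = H A - (zigzag (H A) (H_le A) ^^ n) (H A - rep (teval A x y z eq_test))"
    using rep_teval_eq_test_iter[OF xyz] unfolding u_def .
  have eval: "teval A x y z (discr_term n) = jn A (mt A z u) (mt A x (st A u))"
    unfolding discr_term_def u_def by simp
  show "teval A x y z (discr_term n) = discr x y z"
  proof (cases "x = y")
    case True
    then have "rep u = H A"
      using teval_eq_test[OF reg xyz] rep_u rep_top by (simp add: funpow_zigzag_empty)
    then have "u = top A" using rep_eqI[OF u top_closed] rep_top by simp
    then show ?thesis using eval True xyz st_top mt_top mt_bot jn_bot unfolding discr_def by simp
  next
    case False
    let ?t = "teval A x y z eq_test"
    have "?t \<in> car A" using teval_closed[OF alg_closed] xyz by blast
    moreover have "?t \<noteq> top A" using teval_eq_test[OF reg xyz] False by simp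
    ultimately have "H A - rep ?t \<noteq> {}"
      using rep_eq_iff[of ?t "top A"] rep_top rep_subset[of ?t] by auto
    then have "rep u = {}"
      using rep_u funpow_zigzag_eq[OF H_le_poset conn finite_H Diff_subset _ n] by simp
    then have "u = bot A" using rep_eqI[OF u bot_closed] rep_bot by simp
    then have "teval A x y z (discr_term n) = jn A (bot A) x"
      using eval xyz st_bot mt_top mt_bot by simp
    then show ?thesis using False xyz jn_comm jn_bot unfolding discr_def by (metis bot_closed)
  qed
qed

lemma simple_iff_connected_max_or_min:
  "simple A \<longleftrightarrow> poset_connected (H A) (H_le A) \<and> max_or_min (H A) (H_le A)"
  using simple_imp_di di_imp_connected simple_imp_max_or_min max_or_min_imp_regular
    is_discr_term_discr_term[OF _ _ order_refl] discr_term_imp_simple[OF alg_closed] by blast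

lemma di_regular_iff_connected_max_or_min:
  "directly_indecomposable A \<and> regular A \<longleftrightarrow> poset_connected (H A) (H_le A) \<and> max_or_min (H A) (H_le A)"
  using di_imp_connected connected_imp_di regular_imp_max_or_min max_or_min_imp_regular by blast

end

theorem theorem4p1:
  fixes \<B> :: "'a dpa set"
  assumes "finite \<B>"
    and "\<forall>A\<in>\<B>. ddp_algebra A \<and> finite (car A)"
  shows "(((\<forall>A\<in>\<B>. quasi_primal A) \<and> (\<exists>t. \<forall>A\<in>\<B>. is_discr_term t A))
           \<longleftrightarrow> (\<forall>A\<in>\<B>. simple A))
       \<and> ((\<forall>A\<in>\<B>. simple A)
           \<longleftrightarrow> (\<forall>A\<in>\<B>. directly_indecomposable A \<and> regular A))
       \<and> ((\<forall>A\<in>\<B>. directly_indecomposable A \<and> regular A)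
           \<longleftrightarrow> (\<forall>X\<in>{(H A, H_le A) | A. A \<in> \<B>}.
                  poset_connected (fst X) (snd X) \<and>
                  (\<forall>x\<in>fst X. is_maximal (fst X) (snd X) x \<or> is_minimal (fst X) (snd X) x)))"
proof -
  have alg: "fin_ddp_algebra A" if "A \<in> \<B>" for A
    using assms(2) that unfolding fin_ddp_algebra_def by blast
  define N where "N = (\<Sum>A\<in>\<B>. 2 ^ card (car A) :: nat)"
  have "is_discr_term (discr_term N) A" if A: "A \<in> \<B>" and "simple A" for A
  proof -
    interpret fin_ddp_algebra A using alg[OF A] .
    have "card (H A) \<le> N"
      using card_H_le member_le_sum[OF A _ assms(1)] unfolding N_def by (meson le_trans zero_le)
    then show ?thesis
      using is_discr_term_discr_term max_or_min_imp_regular simple_iff_connected_max_or_min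
        \<open>simple A\<close> by blast
  qed
  then have "((\<forall>A\<in>\<B>. quasi_primal A) \<and> (\<exists>t. \<forall>A\<in>\<B>. is_discr_term t A)) \<longleftrightarrow> (\<forall>A\<in>\<B>. simple A)"
    using discr_term_imp_simple fin_ddp_algebra.alg_closed alg assms(2)
    unfolding quasi_primal_def by metis
  moreover have "(\<forall>X\<in>{(H A, H_le A) | A. A \<in> \<B>}.
      poset_connected (fst X) (snd X) \<and>
      (\<forall>x\<in>fst X. is_maximal (fst X) (snd X) x \<or> is_minimal (fst X) (snd X) x))
    \<longleftrightarrow> (\<forall>A\<in>\<B>. poset_connected (H A) (H_le A) \<and> max_or_min (H A) (H_le A))"
    unfolding max_or_min_def by auto
  ultimately show ?thesis
    using fin_ddp_algebra.simple_iff_connected_max_or_min[OF alg]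
      fin_ddp_algebra.di_regular_iff_connected_max_or_min[OF alg] by blast
qed

end
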